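(* For every $k\ge2$, the $k$-way indicator aggregation portfolio strategy $\mathrm{IA}[k]$ is universalizable.
   Context: Market with $m\ge2$ assets and return vectors $\mathbf x_t\in(0,\infty)^m$, $t\ge0$. On each day $t$, each stock $i$ has indicators $\mathbf v_{ti}=(v_{ti1},\dots,v_{tik})\in(0,1]^k$, normalized so that for every $t$ and $j$ there is some $i$ with $v_{tij}=1$. $\mathrm{IA}[k]$ has parameter space $\mathcal W_k=\{\mathbf w\in[0,1]^k:\sum_j w_j=1\}$ and description $\mathrm{IA}_t(\mathbf w)=\Big(\frac{\mathbf w\cdot\mathbf v_{t1}}{\sum_{l=1}^m\mathbf w\cdot\mathbf v_{tl}},\dots,\frac{\mathbf w\cdot\mathbf v_{tm}}{\sum_{l=1}^m\mathbf w\cdot\mathbf v_{tl}}\Big)$. General notions: for a strategy $S$ with parameter space $\mathbb W$ and descriptions $S_t(\mathbf w)\in\mathcal W_m$, $\mathcal R_n(S(\mathbf w))=\prod_{t=0}^{n-1}S_t(\mathbf w)\cdot\mathbf x_t$ ($\mathcal R_0\equiv1$), $\mathcal L_n=\frac1n\log\mathcal R_n$, similarly for parameter-free strategies. $\mu$ is the uniform probability measure on $\mathbb W$ and $\mathcal U(S)$ has $\mathcal U_t(S)=\int_{\mathbb W}S_t\mathcal R_t\,d\mu/\int_{\mathbb W}\mathcal R_t\,d\mu$. $U$ is a universalization of $S$ if there is $\eta_n\to0$, independent of market data, with $\mathcal L_n(U)\ge\sup_{\mathbf w}\mathcal L_n(S(\mathbf w))-\eta_n$ for all $n$ and all market data.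 The $\varepsilon$-modification is $\bar S_t(\mathbf w)=(1-\frac{\varepsilon}{2(t+1)^2})S_t(\mathbf w)+\frac{\varepsilon}{2m(t+1)^2}(1,\dots,1)$; $S$ is universalizable if for every $\varepsilon\in(0,1)$, $\mathcal U(\bar S)$ is a universalization of $S$. *)

theory Defs
  imports "HOL-Analysis.Analysis"
begin

text \<open>Assets are indexed by 0..<m, indicators by 0..<k, days by t :: nat.
  Vectors are functions nat => real; only the indicated indices matter.
  A (parametrised) strategy depends on market data d :: 'd and is a function
  S d t w i = i-th weight of the portfolio on day t for parameter w.\<close>

definition dotm :: "nat \<Rightarrow> (nat \<Rightarrow> real) \<Rightarrow> (nat \<Rightarrow> real) \<Rightarrow> real" where
  "dotm m b x = (\<Sum>i<m. b i * x i)"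

definition wealth :: "nat \<Rightarrow> (nat \<Rightarrow> nat \<Rightarrow> real) \<Rightarrow> (nat \<Rightarrow> nat \<Rightarrow> real) \<Rightarrow> nat \<Rightarrow> real" where
  "wealth m x P n = (\<Prod>t<n. dotm m (P t) (x t))"

definition growth :: "nat \<Rightarrow> (nat \<Rightarrow> nat \<Rightarrow> real) \<Rightarrow> (nat \<Rightarrow> nat \<Rightarrow> real) \<Rightarrow> nat \<Rightarrow> real" where
  "growth m x P n = ln (wealth m x P n) / real n"

definition univ_port ::
  "'w measure \<Rightarrow> nat \<Rightarrow> ('d \<Rightarrow> nat \<Rightarrow> nat \<Rightarrow> real) \<Rightarrow>
   ('d \<Rightarrow> nat \<Rightarrow> 'w \<Rightarrow> nat \<Rightarrow> real) \<Rightarrow> 'd \<Rightarrow> nat \<Rightarrow> nat \<Rightarrow> real" where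
  "univ_port \<mu> m xs S d t i =
     (\<integral>w. S d t w i * wealth m (xs d) (\<lambda>s. S d s w) t \<partial>\<mu>) /
     (\<integral>w. wealth m (xs d) (\<lambda>s. S d s w) t \<partial>\<mu>)"

definition is_universalization ::
  "'d set \<Rightarrow> nat \<Rightarrow> ('d \<Rightarrow> nat \<Rightarrow> nat \<Rightarrow> real) \<Rightarrow> 'w set \<Rightarrow>
   ('d \<Rightarrow> nat \<Rightarrow> nat \<Rightarrow> real) \<Rightarrow> ('d \<Rightarrow> nat \<Rightarrow> 'w \<Rightarrow> nat \<Rightarrow> real) \<Rightarrow> bool" where
  "is_universalization Data m xs W U S \<longleftrightarrow>
     (\<exists>\<eta>::nat \<Rightarrow> real. \<eta> \<longlonglongrightarrow> 0 \<and>
        (\<forall>d\<in>Data. \<forall>n\<ge>1.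
           growth m (xs d) (U d) n \<ge> (SUP w\<in>W. growth m (xs d) (\<lambda>t. S d t w) n) - \<eta> n))"

definition eps_mod ::
  "nat \<Rightarrow> real \<Rightarrow> ('d \<Rightarrow> nat \<Rightarrow> 'w \<Rightarrow> nat \<Rightarrow> real) \<Rightarrow> 'd \<Rightarrow> nat \<Rightarrow> 'w \<Rightarrow> nat \<Rightarrow> real" where
  "eps_mod m \<epsilon> S d t w i =
     (1 - \<epsilon> / (2 * (real t + 1)^2)) * S d t w i + \<epsilon> / (2 * real m * (real t + 1)^2)"

definition universalizable ::
  "'d set \<Rightarrow> nat \<Rightarrow> ('d \<Rightarrow> nat \<Rightarrow> nat \<Rightarrow> real) \<Rightarrow> 'w set \<Rightarrow> 'w measure \<Rightarrow>
   ('d \<Rightarrow> nat \<Rightarrow> 'w \<Rightarrow> nat \<Rightarrow> real) \<Rightarrow> bool" where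
  "universalizable Data m xs W \<mu> S \<longleftrightarrow>
     (\<forall>\<epsilon>. 0 < \<epsilon> \<and> \<epsilon> < 1 \<longrightarrow>
        is_universalization Data m xs W (univ_port \<mu> m xs (eps_mod m \<epsilon> S)) S)"

definition param_simplex :: "nat \<Rightarrow> (nat \<Rightarrow> real) set" where
  "param_simplex k = {w. (\<forall>j<k. 0 \<le> w j \<and> w j \<le> 1) \<and> (\<forall>j\<ge>k. w j = 0) \<and> (\<Sum>j<k. w j) = 1}"

text \<open>Uniform probability measure on W_k: the normalised Lebesgue measure on the
  projected simplex {u in R^(k-1). u >= 0, sum u <= 1}, pushed forward by the affine
  bijection onto W_k (which has constant Jacobian, hence preserves uniformity).\<close>
definition simplex_base :: "nat \<Rightarrow> (nat \<Rightarrow> real) set" where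
  "simplex_base k = {u \<in> space (PiM {..<k-1} (\<lambda>_. lborel)).
      (\<forall>i<k-1. 0 \<le> u i) \<and> (\<Sum>i<k-1. u i) \<le> 1}"

definition simplex_embed :: "nat \<Rightarrow> (nat \<Rightarrow> real) \<Rightarrow> nat \<Rightarrow> real" where
  "simplex_embed k u = (\<lambda>j. if j < k - 1 then u j else if j = k - 1 then 1 - (\<Sum>i<k-1. u i) else 0)"

definition unif_simplex :: "nat \<Rightarrow> (nat \<Rightarrow> real) measure" where
  "unif_simplex k = distr (uniform_measure (PiM {..<k-1} (\<lambda>_. lborel)) (simplex_base k))
                          (PiM UNIV (\<lambda>_. borel)) (simplex_embed k)"

definition IA_data :: "nat \<Rightarrow> nat \<Rightarrow> ((nat \<Rightarrow> nat \<Rightarrow> real) \<times> (nat \<Rightarrow> nat \<Rightarrow> nat \<Rightarrow> real)) set" where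
  "IA_data m k = {(x, v).
      (\<forall>t i. i < m \<longrightarrow> 0 < x t i) \<and>
      (\<forall>t i j. i < m \<longrightarrow> j < k \<longrightarrow> 0 < v t i j \<and> v t i j \<le> 1) \<and>
      (\<forall>t j. j < k \<longrightarrow> (\<exists>i<m. v t i j = 1))}"

definition IA :: "nat \<Rightarrow> nat \<Rightarrow> (nat \<Rightarrow> nat \<Rightarrow> nat \<Rightarrow> real) \<Rightarrow> nat \<Rightarrow> (nat \<Rightarrow> real) \<Rightarrow> nat \<Rightarrow> real" where
  "IA k m v t w i = (\<Sum>j<k. w j * v t i j) / (\<Sum>l<m. \<Sum>j<k. w j * v t l j)"

end

theory Submission
  imports Defs "HOL-Probability.Probability_Measure" "HOL-Real_Asymp.Real_Asymp"
begin

text \<open>The universal portfolio of the modified strategy telescopes: its wealth after n days is the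
  average over W_k of the wealths of the modified strategies. The modification costs at most a factor
  1/(n+1) over n days. If w dominates \<theta> w0 componentwise with \<theta> = n/(n+1), then IA(w) gives every
  asset at least n/(n+m) times the weight IA(w0) gives it, because every column sum of the indicators
  lies in [1, m]. So on the shrunken simplex \<theta> w0 + (1 - \<theta>) W_k the wealth is at least
  (n/(n+m))^n/(n+1) times that of IA(w0), and this set has uniform measure at least
  ((n+1)(k-1))^-(k-1). Taking logarithms, the regret is O(k log n / n).\<close>

section \<open>The uniform measure on the simplex\<close>

abbreviation lborel_base :: "nat \<Rightarrow> (nat \<Rightarrow> real) measure" where
  "lborel_base k \<equiv> PiM {..<k-1} (\<lambda>_. lborel)"

abbreviation unif_base :: "nat \<Rightarrow> (nat \<Rightarrow> real) measure" where
  "unif_base k \<equiv> uniform_measure (lborel_base k) (simplex_base k)"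

abbreviation borel_params :: "(nat \<Rightarrow> real) measure" where
  "borel_params \<equiv> PiM UNIV (\<lambda>_. borel)"

lemma sets_simplex_base [measurable]: "simplex_base k \<in> sets (lborel_base k)"
  unfolding simplex_base_def by measurable

lemma emeasure_simplex_base: "emeasure (lborel_base k) (simplex_base k) = ennreal (1 / fact (k-1))"
proof -
  have "simplex_base k = {u. (\<forall>i\<in>{..<k-1}. 0 \<le> u i) \<and> sum u {..<k-1} \<le> 1} \<inter> space (lborel_base k)"
    unfolding simplex_base_def by auto
  then show ?thesis
    using emeasure_std_simplex_aux[of "{..<k-1}" 1] by simp
qed

lemma prob_space_unif_base: "prob_space (unif_base k)"
proof
  have "simplex_base k \<inter> space (lborel_base k) = simplex_base k"
    using sets.sets_into_space[OF sets_simplex_base] by blast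
  then show "emeasure (unif_base k) (space (unif_base k)) = 1"
    by (simp add: emeasure_simplex_base divide_ennreal del: One_nat_def)
qed

lemma AE_unif_base: "AE u in unif_base k. u \<in> simplex_base k"
  by (rule AE_uniform_measureI) (auto simp del: One_nat_def)

lemma measurable_simplex_embed [measurable]:
  "simplex_embed k \<in> measurable (lborel_base k) borel_params"
proof (rule measurable_PiM_single')
  fix j :: nat
  show "(\<lambda>u. simplex_embed k u j) \<in> borel_measurable (lborel_base k)"
    unfolding simplex_embed_def by (cases "j < k - 1"; cases "j = k - 1") simp_all
qed (simp add: space_PiM)

lemma measurable_simplex_embed_unif_base [measurable]:
  "simplex_embed k \<in> measurable (unif_base k) borel_params"
  using measurable_simplex_embed by (simp add: measurable_def)

lemma prob_space_unif_simplex: "prob_space (unif_simplex k)"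
  unfolding unif_simplex_def
  by (intro prob_space.prob_space_distr prob_space_unif_base measurable_simplex_embed_unif_base)

lemma param_simplexD:
  assumes "w \<in> param_simplex k"
  shows "\<And>j. j < k \<Longrightarrow> 0 \<le> w j" "(\<Sum>j<k. w j) = 1"
  using assms unfolding param_simplex_def by auto

lemma vertex_in_param_simplex: "1 \<le> k \<Longrightarrow> (\<lambda>j. if j = 0 then 1 else 0) \<in> param_simplex k"
  unfolding param_simplex_def by (auto simp: sum.delta)

lemma sum_simplex_embed:
  assumes "1 \<le> k"
  shows "(\<Sum>j<k. simplex_embed k u j) = 1"
proof -
  have "(\<Sum>j<k. simplex_embed k u j) = (\<Sum>j<k-1. simplex_embed k u j) + simplex_embed k u (k-1)"
    using assms by (metis Suc_diff_1 less_le_trans sum.lessThan_Suc zero_less_one)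
  also have "(\<Sum>j<k-1. simplex_embed k u j) = (\<Sum>j<k-1. u j)"
    by (rule sum.cong) (auto simp: simplex_embed_def)
  finally show ?thesis by (simp add: simplex_embed_def)
qed

lemma simplex_embed_in_param_simplex:
  assumes "u \<in> simplex_base k" "1 \<le> k"
  shows "simplex_embed k u \<in> param_simplex k"
proof -
  have u0: "\<And>i. i < k - 1 \<Longrightarrow> 0 \<le> u i" and u_sum: "(\<Sum>i<k-1. u i) \<le> 1"
    using assms(1) unfolding simplex_base_def by auto
  have "u i \<le> 1" if "i < k - 1" for i
  proof -
    have "u i \<le> (\<Sum>i<k-1. u i)"
      by (rule member_le_sum) (use that u0 in auto)
    with u_sum show ?thesis by linarith
  qed
  moreover have "0 \<le> (\<Sum>i<k-1. u i)"
    using u0 by (intro sum_nonneg) auto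
  ultimately have "\<forall>j<k. 0 \<le> simplex_embed k u j \<and> simplex_embed k u j \<le> 1"
    using u0 u_sum by (auto simp: simplex_embed_def)
  moreover have "\<forall>j\<ge>k. simplex_embed k u j = 0"
    using assms(2) by (auto simp: simplex_embed_def)
  ultimately show ?thesis
    using sum_simplex_embed[OF assms(2)] unfolding param_simplex_def by blast
qed

lemma cube_subset_simplex_base:
  assumes "\<And>i. i < k - 1 \<Longrightarrow> 0 \<le> a i" "0 \<le> h" "(\<Sum>i<k-1. a i) + real (k-1) * h \<le> 1"
  shows "PiE {..<k-1} (\<lambda>i. {a i..a i + h}) \<subseteq> simplex_base k"
proof
  fix u assume u: "u \<in> PiE {..<k-1} (\<lambda>i. {a i..a i + h})"
  have ui: "a i \<le> u i \<and> u i \<le> a i + h" if "i < k - 1" for i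
    using PiE_mem[OF u, of i] that by simp
  have "(\<Sum>i<k-1. u i) \<le> (\<Sum>i<k-1. a i + h)"
    using ui by (intro sum_mono) simp
  also have "\<dots> \<le> 1"
    using assms(3) by (simp add: sum.distrib)
  finally have "(\<Sum>i<k-1. u i) \<le> 1" .
  moreover have "\<forall>i<k-1. 0 \<le> u i"
  proof (intro allI impI)
    fix i assume "i < k - 1"
    with ui[OF this] assms(1)[OF this] show "0 \<le> u i" by linarith
  qed
  moreover have "PiE {..<k-1} (\<lambda>i. {a i..a i + h}) \<subseteq> PiE {..<k-1} (\<lambda>_. UNIV)"
    by (rule PiE_mono) simp
  then have "u \<in> space (lborel_base k)"
    using u by (simp add: space_PiM) blast
  ultimately show "u \<in> simplex_base k"
    unfolding simplex_base_def by blast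
qed

lemma measure_cube_unif_base_ge:
  assumes "\<And>i. i < k - 1 \<Longrightarrow> 0 \<le> a i" "0 \<le> h" "(\<Sum>i<k-1. a i) + real (k-1) * h \<le> 1"
  shows "h ^ (k-1) \<le> measure (unif_base k) (PiE {..<k-1} (\<lambda>i. {a i..a i + h}))"
proof -
  interpret product_sigma_finite "\<lambda>_. lborel :: real measure" by standard
  let ?C = "PiE {..<k-1} (\<lambda>i. {a i..a i + h})"
  have C: "?C \<in> sets (lborel_base k)"
    by (rule sets_PiM_I_finite) auto
  have "emeasure (lborel_base k) ?C = ennreal (h ^ (k-1))"
    using assms(2) by (subst emeasure_PiM) (auto simp: prod_ennreal ennreal_power)
  then have "measure (lborel_base k) ?C = h ^ (k-1)"
    using assms(2) by (simp add: measure_def)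
  then have "measure (unif_base k) ?C = h ^ (k-1) * fact (k-1)"
    using cube_subset_simplex_base[OF assms] emeasure_simplex_base[of k]
    by (subst measure_uniform_measure) (auto simp: measure_def Int_absorb1)
  moreover have "h ^ (k-1) \<le> h ^ (k-1) * fact (k-1)"
    using assms(2) by (simp add: mult_le_cancel_left1)
  ultimately show ?thesis by simp
qed

lemma simplex_embed_ge_scaled:
  assumes w0: "w0 \<in> param_simplex k" and k: "2 \<le> k" and j: "j < k"
    and u: "u \<in> PiE {..<k-1} (\<lambda>i. {\<theta> * w0 i..\<theta> * w0 i + (1 - \<theta>) / real (k-1)})"
  shows "\<theta> * w0 j \<le> simplex_embed k u j"
proof (cases "j < k - 1")
  case True
  then show ?thesis
    using PiE_mem[OF u, of j] by (simp add: simplex_embed_def)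
next
  case False
  then have j_last: "j = k - 1" using j by simp
  have w0_last: "w0 (k-1) = 1 - (\<Sum>i<k-1. w0 i)"
    using param_simplexD(2)[OF w0] k by (metis Suc_diff_1 add_diff_cancel_left' less_le_trans pos2 sum.lessThan_Suc)
  have "(\<Sum>i<k-1. u i) \<le> (\<Sum>i<k-1. \<theta> * w0 i + (1 - \<theta>) / real (k-1))"
    using PiE_mem[OF u] by (intro sum_mono) simp
  also have "\<dots> = \<theta> * (\<Sum>i<k-1. w0 i) + (1 - \<theta>)"
    using k by (simp add: sum.distrib sum_distrib_left)
  finally show ?thesis
    unfolding j_last w0_last using k by (simp add: simplex_embed_def algebra_simps)
qed

lemma integrable_unif_simplex:
  fixes g :: "(nat \<Rightarrow> real) \<Rightarrow> real"
  assumes g: "g \<in> borel_measurable borel_params" and k: "1 \<le> k"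
    and bound: "\<And>w. w \<in> param_simplex k \<Longrightarrow> \<bar>g w\<bar> \<le> B"
  shows "integrable (unif_simplex k) g"
proof -
  interpret prob_space "unif_base k" by (rule prob_space_unif_base)
  have "integrable (unif_base k) (\<lambda>u. g (simplex_embed k u))"
  proof (rule integrable_const_bound)
    show "AE u in unif_base k. norm (g (simplex_embed k u)) \<le> B"
      using AE_unif_base by eventually_elim (use bound simplex_embed_in_param_simplex k in auto)
  qed (use g in measurable)
  then show ?thesis
    unfolding unif_simplex_def integrable_distr_eq[OF measurable_simplex_embed_unif_base g] .
qed

text \<open>In base coordinates, the cube of side (1 - \<theta>)/(k - 1) at \<theta> w0 lies in the base simplex and
  is embedded into the shrunken simplex \<theta> w0 + (1 - \<theta>) W_k.\<close>
lemma integral_unif_simplex_ge: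
  fixes g :: "(nat \<Rightarrow> real) \<Rightarrow> real"
  assumes k: "2 \<le> k" and w0: "w0 \<in> param_simplex k" and \<theta>: "0 \<le> \<theta>" "\<theta> \<le> 1" and C: "0 \<le> C"
    and g: "g \<in> borel_measurable borel_params" "integrable (unif_simplex k) g"
    and g_nonneg: "\<And>w. w \<in> param_simplex k \<Longrightarrow> 0 \<le> g w"
    and g_ge: "\<And>w. w \<in> param_simplex k \<Longrightarrow> (\<And>j. j < k \<Longrightarrow> \<theta> * w0 j \<le> w j) \<Longrightarrow> C \<le> g w"
  shows "C * ((1 - \<theta>) / real (k-1)) ^ (k-1) \<le> integral\<^sup>L (unif_simplex k) g"
proof -
  interpret prob_space "unif_base k" by (rule prob_space_unif_base)
  define h where "h = (1 - \<theta>) / real (k-1)"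
  define cube where "cube = PiE {..<k-1} (\<lambda>i. {\<theta> * w0 i..\<theta> * w0 i + h})"
  have h: "0 \<le> h" "real (k-1) * h = 1 - \<theta>"
    using \<theta> k unfolding h_def by auto
  have cube_sets: "cube \<in> sets (unif_base k)"
    unfolding cube_def by (simp add: sets_PiM_I_finite)
  have "(\<Sum>i<k-1. \<theta> * w0 i) \<le> \<theta>"
  proof -
    have "(\<Sum>i<k-1. w0 i) \<le> (\<Sum>i<k. w0 i)"
      by (rule sum_mono2) (use param_simplexD(1)[OF w0] in auto)
    then show ?thesis
      using \<theta> param_simplexD(2)[OF w0] by (simp add: sum_distrib_left[symmetric] mult_left_le)
  qed
  then have "h ^ (k-1) \<le> measure (unif_base k) cube"
    unfolding cube_def using \<theta> h param_simplexD(1)[OF w0]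
    by (intro measure_cube_unif_base_ge) auto
  then have "C * h ^ (k-1) \<le> (\<integral>u. C * indicator cube u \<partial>unif_base k)"
    using C sets.sets_into_space[OF cube_sets]
    by (simp add: mult_left_mono Int_absorb2 del: measure_uniform_measure emeasure_uniform_measure)
  also have "\<dots> \<le> (\<integral>u. g (simplex_embed k u) \<partial>unif_base k)"
  proof (rule integral_mono_AE)
    show "integrable (unif_base k) (\<lambda>u. C * indicator cube u)"
      using cube_sets emeasure_finite[of cube]
      by (intro integrable_mult_right integrable_real_indicator)
        (auto simp: less_top[symmetric] simp del: emeasure_uniform_measure)
    show "integrable (unif_base k) (\<lambda>u. g (simplex_embed k u))"
      using g(2) unfolding unif_simplex_def integrable_distr_eq[OF measurable_simplex_embed_unif_base g(1)] .
    show "AE u in unif_base k. C * indicator cube u \<le> g (simplex_embed k u)"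
      using AE_unif_base
    proof eventually_elim
      case (elim u)
      then have w: "simplex_embed k u \<in> param_simplex k"
        using k by (intro simplex_embed_in_param_simplex) auto
      have "C \<le> g (simplex_embed k u)" if "u \<in> cube"
        using that by (intro g_ge[OF w] simplex_embed_ge_scaled[OF w0 k]) (auto simp: cube_def h_def)
      then show ?case
        using g_nonneg[OF w] by (auto simp: indicator_def)
    qed
  qed
  also have "\<dots> = integral\<^sup>L (unif_simplex k) g"
    unfolding unif_simplex_def by (rule integral_distr[OF measurable_simplex_embed_unif_base g(1), symmetric])
  finally show ?thesis
    unfolding h_def .
qed

section \<open>Wealth and the \<epsilon>-modification\<close>

lemma dotm_scaled_le:
  assumes "\<And>i. i < m \<Longrightarrow> c * P i \<le> Q i" "\<And>i. i < m \<Longrightarrow> 0 \<le> x i"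
  shows "c * dotm m P x \<le> dotm m Q x"
  unfolding dotm_def sum_distrib_left
  by (rule sum_mono) (use assms in \<open>auto simp: mult.assoc[symmetric] intro: mult_right_mono\<close>)

lemma wealth_scaled_le:
  assumes "\<And>t. t < n \<Longrightarrow> 0 \<le> a t" "\<And>t. t < n \<Longrightarrow> 0 \<le> dotm m (P t) (x t)"
    and "\<And>t. t < n \<Longrightarrow> a t * dotm m (P t) (x t) \<le> dotm m (Q t) (x t)"
  shows "(\<Prod>t<n. a t) * wealth m x P n \<le> wealth m x Q n"
  unfolding wealth_def prod.distrib[symmetric]
  by (rule prod_mono) (use assms in auto)

lemma wealth_bounds:
  assumes "\<And>t i. i < m \<Longrightarrow> 0 \<le> P t i \<and> P t i \<le> 1" "\<And>t i. i < m \<Longrightarrow> 0 \<le> x t i"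
  shows "0 \<le> wealth m x P n" "wealth m x P n \<le> (\<Prod>t<n. \<Sum>i<m. x t i)"
proof -
  have "0 \<le> dotm m (P t) (x t) \<and> dotm m (P t) (x t) \<le> (\<Sum>i<m. x t i)" for t
    unfolding dotm_def using assms
    by (auto intro!: sum_nonneg sum_mono simp: mult_left_le_one_le)
  then show "0 \<le> wealth m x P n" "wealth m x P n \<le> (\<Prod>t<n. \<Sum>i<m. x t i)"
    unfolding wealth_def by (auto intro: prod_nonneg prod_mono)
qed

lemma wealth_univ_port:
  assumes \<mu>: "prob_space \<mu>"
    and int_nz: "\<And>t. (\<integral>w. wealth m (xs d) (\<lambda>s. S d s w) t \<partial>\<mu>) \<noteq> 0"
    and int: "\<And>t i. i < m \<Longrightarrow> integrable \<mu> (\<lambda>w. S d t w i * wealth m (xs d) (\<lambda>s. S d s w) t)"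
  shows "wealth m (xs d) (univ_port \<mu> m xs S d) n = (\<integral>w. wealth m (xs d) (\<lambda>s. S d s w) n \<partial>\<mu>)"
proof (induction n)
  case 0
  show ?case
    using prob_space.prob_space[OF \<mu>] by (simp add: wealth_def)
next
  case (Suc n)
  define F where "F t w = wealth m (xs d) (\<lambda>s. S d s w) t" for t w
  have "dotm m (univ_port \<mu> m xs S d n) (xs d n)
        = (\<Sum>i<m. (\<integral>w. S d n w i * F n w * xs d n i \<partial>\<mu>)) / (\<integral>w. F n w \<partial>\<mu>)"
    unfolding dotm_def univ_port_def F_def by (simp add: sum_divide_distrib)
  also have "(\<Sum>i<m. (\<integral>w. S d n w i * F n w * xs d n i \<partial>\<mu>))
      = (\<integral>w. (\<Sum>i<m. S d n w i * F n w * xs d n i) \<partial>\<mu>)"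
    unfolding F_def by (rule Bochner_Integration.integral_sum[symmetric]) (auto intro!: integrable_mult_left int)
  also have "\<dots> = (\<integral>w. F (Suc n) w \<partial>\<mu>)"
    unfolding F_def wealth_def dotm_def by (simp add: sum_distrib_right mult_ac)
  finally show ?case
    using Suc.IH int_nz unfolding F_def by (simp add: wealth_def)
qed

lemma prod_succ_ratio: "(\<Prod>t<n. (real t + 1) / (real t + 2)) = 1 / (real n + 1)"
  by (induction n) (simp_all add: field_simps)

lemma eps_mod_weight_bounds:
  assumes "0 < \<epsilon>" "\<epsilon> < 1"
  shows "0 \<le> \<epsilon> / (2 * (real t + 1)^2)" "\<epsilon> / (2 * (real t + 1)^2) \<le> 1 / (real t + 2)"
proof -
  show "0 \<le> \<epsilon> / (2 * (real t + 1)^2)"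
    using assms by simp
  have "\<epsilon> / (2 * (real t + 1)^2) \<le> 1 / (2 * (real t + 1)^2)"
    using assms by (intro divide_right_mono) auto
  also have "\<dots> \<le> 1 / (real t + 2)"
  proof (rule frac_le)
    have "real t + 1 \<le> (real t + 1)^2"
      by (rule self_le_power) auto
    then show "real t + 2 \<le> 2 * (real t + 1)^2"
      by linarith
  qed auto
  finally show "\<epsilon> / (2 * (real t + 1)^2) \<le> 1 / (real t + 2)" .
qed

lemma eps_mod_bounds:
  assumes "0 \<le> S d t w i" "S d t w i \<le> 1" "0 < \<epsilon>" "\<epsilon> < 1" "1 \<le> m"
  shows "0 \<le> eps_mod m \<epsilon> S d t w i" "eps_mod m \<epsilon> S d t w i \<le> 1"
proof -
  define \<gamma> where "\<gamma> = \<epsilon> / (2 * (real t + 1)^2)"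
  have "1 / (real t + 2) \<le> 1"
    by simp
  then have \<gamma>: "0 \<le> \<gamma>" "\<gamma> \<le> 1"
    using eps_mod_weight_bounds[OF assms(3,4), of t] unfolding \<gamma>_def by linarith+
  have "\<epsilon> / (2 * real m * (real t + 1)^2) \<le> \<gamma>"
    unfolding \<gamma>_def using assms by (intro divide_left_mono) auto
  moreover have "eps_mod m \<epsilon> S d t w i = (1 - \<gamma>) * S d t w i + \<epsilon> / (2 * real m * (real t + 1)^2)"
    unfolding eps_mod_def \<gamma>_def ..
  moreover have "(1 - \<gamma>) * S d t w i \<le> 1 - \<gamma>"
    using \<gamma> assms(2) by (simp add: mult_left_le)
  ultimately show "0 \<le> eps_mod m \<epsilon> S d t w i" "eps_mod m \<epsilon> S d t w i \<le> 1"
    using \<gamma> assms(1,3) by auto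
qed

lemma eps_mod_ge:
  assumes "0 \<le> S d t w i" "0 < \<epsilon>" "\<epsilon> < 1"
  shows "(real t + 1) / (real t + 2) * S d t w i \<le> eps_mod m \<epsilon> S d t w i"
proof -
  have "(real t + 1) / (real t + 2) = 1 - 1 / (real t + 2)"
    by (simp add: field_simps)
  then have "(real t + 1) / (real t + 2) \<le> 1 - \<epsilon> / (2 * (real t + 1)^2)"
    using eps_mod_weight_bounds[OF assms(2,3), of t] by linarith
  then have "(real t + 1) / (real t + 2) * S d t w i \<le> (1 - \<epsilon> / (2 * (real t + 1)^2)) * S d t w i"
    using assms(1) by (rule mult_right_mono)
  also have "\<dots> \<le> eps_mod m \<epsilon> S d t w i"
    unfolding eps_mod_def using assms(2) by simp
  finally show ?thesis .
qed

section \<open>Indicator aggregation\<close>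

abbreviation IA_strategy :: "nat \<Rightarrow> nat \<Rightarrow> 'x \<times> (nat \<Rightarrow> nat \<Rightarrow> nat \<Rightarrow> real) \<Rightarrow> nat \<Rightarrow> (nat \<Rightarrow> real) \<Rightarrow> nat \<Rightarrow> real" where
  "IA_strategy k m \<equiv> \<lambda>d. IA k m (snd d)"

lemma IA_data_returns_pos:
  assumes "(x, v) \<in> IA_data m k" "i < m"
  shows "0 < x t i"
  using assms unfolding IA_data_def by auto

lemma IA_data_indicator_bounds:
  assumes "(x, v) \<in> IA_data m k" "i < m" "j < k"
  shows "0 < v t i j" "v t i j \<le> 1"
  using assms unfolding IA_data_def by auto

lemma IA_data_column_sum:
  assumes "(x, v) \<in> IA_data m k" "j < k"
  shows "1 \<le> (\<Sum>l<m. v t l j)" "(\<Sum>l<m. v t l j) \<le> real m"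
proof -
  obtain i where i: "i < m" "v t i j = 1"
    using assms unfolding IA_data_def by blast
  have "v t i j \<le> (\<Sum>l<m. v t l j)"
    by (rule member_le_sum) (use i IA_data_indicator_bounds[OF assms(1) _ assms(2)] in \<open>auto intro: less_imp_le\<close>)
  then show "1 \<le> (\<Sum>l<m. v t l j)"
    using i by simp
  have "(\<Sum>l<m. v t l j) \<le> (\<Sum>l<m. 1)"
    by (rule sum_mono) (use IA_data_indicator_bounds[OF assms(1) _ assms(2)] in auto)
  then show "(\<Sum>l<m. v t l j) \<le> real m"
    by simp
qed

lemma IA_denominator_eq:
  fixes w :: "nat \<Rightarrow> real" and v :: "nat \<Rightarrow> nat \<Rightarrow> nat \<Rightarrow> real"
  shows "(\<Sum>l<m. \<Sum>j<k. w j * v t l j) = (\<Sum>j<k. w j * (\<Sum>l<m. v t l j))"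
  unfolding sum_distrib_left by (rule sum.swap)

lemma IA_denominator_ge_1:
  assumes "(x, v) \<in> IA_data m k" "w \<in> param_simplex k"
  shows "1 \<le> (\<Sum>l<m. \<Sum>j<k. w j * v t l j)"
proof -
  have "1 = (\<Sum>j<k. w j * 1)"
    using param_simplexD(2)[OF assms(2)] by simp
  also have "\<dots> \<le> (\<Sum>j<k. w j * (\<Sum>l<m. v t l j))"
    by (intro sum_mono mult_left_mono) (use IA_data_column_sum[OF assms(1)] param_simplexD(1)[OF assms(2)] in auto)
  finally show ?thesis
    unfolding IA_denominator_eq .
qed

lemma IA_numerator_pos:
  assumes "(x, v) \<in> IA_data m k" "w \<in> param_simplex k" "i < m"
  shows "0 < (\<Sum>j<k. w j * v t i j)"
proof -
  obtain j where j: "j < k" "w j \<noteq> 0"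
    using param_simplexD(2)[OF assms(2)] by (metis (no_types, lifting) lessThan_iff sum.neutral zero_neq_one)
  have nonneg: "0 \<le> w j' * v t i j'" if "j' < k" for j'
    using param_simplexD(1)[OF assms(2) that] IA_data_indicator_bounds(1)[OF assms(1,3) that, of t]
    by simp
  have "0 < w j * v t i j"
    using j param_simplexD(1)[OF assms(2) j(1)] IA_data_indicator_bounds(1)[OF assms(1,3) j(1)] by simp
  also have "\<dots> \<le> (\<Sum>j<k. w j * v t i j)"
    by (rule member_le_sum) (use j nonneg in auto)
  finally show ?thesis .
qed

lemma IA_bounds:
  assumes "(x, v) \<in> IA_data m k" "w \<in> param_simplex k" "i < m"
  shows "0 < IA k m v t w i" "IA k m v t w i \<le> 1"
proof -
  have D: "1 \<le> (\<Sum>l<m. \<Sum>j<k. w j * v t l j)"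
    by (rule IA_denominator_ge_1[OF assms(1,2)])
  have "0 \<le> (\<Sum>j<k. w j * v t l j)" if "l < m" for l
    using IA_numerator_pos[OF assms(1,2) that, of t] by simp
  then have "(\<Sum>j<k. w j * v t i j) \<le> (\<Sum>l<m. \<Sum>j<k. w j * v t l j)"
    using assms(3) by (intro member_le_sum) auto
  then show "0 < IA k m v t w i" "IA k m v t w i \<le> 1"
    unfolding IA_def using D IA_numerator_pos[OF assms] by auto
qed

text \<open>If w dominates \<theta> w0, the normaliser of IA(w) exceeds \<theta> times that of IA(w0) by at most
  (1 - \<theta>) m, because every column sum of the indicators lies in [1, m].\<close>
lemma IA_ge_scaled:
  assumes d: "(x, v) \<in> IA_data m k" and w: "w \<in> param_simplex k" and w0: "w0 \<in> param_simplex k"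
    and i: "i < m" and \<theta>: "0 \<le> \<theta>" "\<theta> \<le> 1"
    and ge: "\<And>j. j < k \<Longrightarrow> \<theta> * w0 j \<le> w j"
  shows "\<theta> * IA k m v t w0 i \<le> (\<theta> + (1 - \<theta>) * real m) * IA k m v t w i"
proof -
  define N where "N u = (\<Sum>j<k. u j * v t i j)" for u :: "nat \<Rightarrow> real"
  define D where "D u = (\<Sum>l<m. \<Sum>j<k. u j * v t l j)" for u :: "nat \<Rightarrow> real"
  define c where "c = \<theta> + (1 - \<theta>) * real m"
  have D0: "1 \<le> D w0" and D1: "1 \<le> D w"
    unfolding D_def using IA_denominator_ge_1[OF d] w w0 by auto
  have "(1 - \<theta>) * 1 \<le> (1 - \<theta>) * real m"
    using \<theta> i by (intro mult_left_mono) auto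
  then have c: "1 \<le> c"
    unfolding c_def by simp
  have v: "0 \<le> v t i j" if "j < k" for j
    using IA_data_indicator_bounds(1)[OF d i that, of t] by simp
  have N: "\<theta> * N w0 \<le> N w" "0 \<le> N w"
    unfolding N_def sum_distrib_left using IA_numerator_pos[OF d w i, of t]
    by (auto intro!: sum_mono mult_right_mono ge v simp: mult.assoc[symmetric])
  have "D w - \<theta> * D w0 = (\<Sum>j<k. (w j - \<theta> * w0 j) * (\<Sum>l<m. v t l j))"
    unfolding D_def IA_denominator_eq sum_distrib_left
    by (simp add: sum_subtractf[symmetric] algebra_simps)
  also have "\<dots> \<le> (\<Sum>j<k. (w j - \<theta> * w0 j) * real m)"
    by (intro sum_mono mult_left_mono) (use ge IA_data_column_sum[OF d] in auto)
  also have "\<dots> = (1 - \<theta>) * real m"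
    using param_simplexD(2)[OF w] param_simplexD(2)[OF w0]
    by (simp add: sum_distrib_right[symmetric] sum_subtractf sum_distrib_left[symmetric])
  finally have "D w \<le> \<theta> * D w0 + (1 - \<theta>) * real m"
    by simp
  also have "\<dots> \<le> c * D w0"
  proof -
    have "(1 - \<theta>) * real m * 1 \<le> (1 - \<theta>) * real m * D w0"
      using D0 \<theta> by (intro mult_left_mono) auto
    then show ?thesis
      unfolding c_def by (simp add: distrib_right)
  qed
  finally have DD: "D w \<le> c * D w0" .
  have "\<theta> * IA k m v t w0 i = \<theta> * N w0 / D w0"
    unfolding IA_def N_def D_def by simp
  also have "\<dots> \<le> N w / D w0"
    using N D0 by (simp add: divide_right_mono)
  also have "\<dots> = c * (N w / (c * D w0))"
    using c by simp
  also have "\<dots> \<le> c * (N w / D w)"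
    using DD D1 c N(2) by (intro mult_left_mono divide_left_mono) auto
  finally show ?thesis
    unfolding IA_def N_def D_def c_def .
qed

abbreviation IA_mod :: "nat \<Rightarrow> nat \<Rightarrow> real \<Rightarrow> 'x \<times> (nat \<Rightarrow> nat \<Rightarrow> nat \<Rightarrow> real) \<Rightarrow> nat \<Rightarrow> (nat \<Rightarrow> real) \<Rightarrow> nat \<Rightarrow> real" where
  "IA_mod k m \<epsilon> \<equiv> eps_mod m \<epsilon> (IA_strategy k m)"

lemma IA_mod_bounds:
  assumes "(x, v) \<in> IA_data m k" "w \<in> param_simplex k" "i < m" "0 < \<epsilon>" "\<epsilon> < 1"
  shows "0 \<le> IA_mod k m \<epsilon> (x, v) t w i \<and> IA_mod k m \<epsilon> (x, v) t w i \<le> 1"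
  using eps_mod_bounds[of "IA_strategy k m" "(x, v)" t w i \<epsilon> m] IA_bounds[OF assms(1-3), of t] assms(3-5)
  by simp

lemma wealth_IA_mod_bounds:
  assumes "(x, v) \<in> IA_data m k" "w \<in> param_simplex k" "0 < \<epsilon>" "\<epsilon> < 1"
  shows "0 \<le> wealth m x (\<lambda>s. IA_mod k m \<epsilon> (x, v) s w) n"
    "wealth m x (\<lambda>s. IA_mod k m \<epsilon> (x, v) s w) n \<le> (\<Prod>t<n. \<Sum>i<m. x t i)"
proof -
  have P: "\<And>t i. i < m \<Longrightarrow> 0 \<le> IA_mod k m \<epsilon> (x, v) t w i \<and> IA_mod k m \<epsilon> (x, v) t w i \<le> 1"
    using IA_mod_bounds[OF assms(1,2) _ assms(3,4)] by blast
  have X: "\<And>t i. i < m \<Longrightarrow> 0 \<le> x t i"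
    using IA_data_returns_pos[OF assms(1)] less_imp_le by blast
  show "0 \<le> wealth m x (\<lambda>s. IA_mod k m \<epsilon> (x, v) s w) n"
    by (rule wealth_bounds(1)[OF P X])
  show "wealth m x (\<lambda>s. IA_mod k m \<epsilon> (x, v) s w) n \<le> (\<Prod>t<n. \<Sum>i<m. x t i)"
    by (rule wealth_bounds(2)[OF P X])
qed

lemma dotm_IA_pos:
  assumes "(x, v) \<in> IA_data m k" "w \<in> param_simplex k" "1 \<le> m"
  shows "0 < dotm m (IA k m v t w) (x t)"
  unfolding dotm_def
proof (rule sum_pos)
  have "0 \<in> {..<m}"
    using assms(3) by simp
  then show "{..<m} \<noteq> {}"
    by blast
qed (use IA_bounds(1)[OF assms(1,2)] IA_data_returns_pos[OF assms(1)] in auto)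

lemma wealth_IA_pos:
  assumes "(x, v) \<in> IA_data m k" "w \<in> param_simplex k" "1 \<le> m"
  shows "0 < wealth m x (\<lambda>s. IA k m v s w) n"
  unfolding wealth_def using dotm_IA_pos[OF assms] by (intro prod_pos) simp

lemma measurable_IA [measurable]:
  "(\<lambda>w. IA k m v t w i) \<in> borel_measurable borel_params"
  unfolding IA_def by measurable

lemma measurable_IA_mod [measurable]:
  "(\<lambda>w. IA_mod k m \<epsilon> d t w i) \<in> borel_measurable borel_params"
  unfolding eps_mod_def by measurable

lemma measurable_wealth_IA_mod [measurable]:
  "(\<lambda>w. wealth m x (\<lambda>s. IA_mod k m \<epsilon> d s w) n) \<in> borel_measurable borel_params"
  unfolding wealth_def dotm_def by measurable

lemma integrable_wealth_IA_mod:
  assumes "(x, v) \<in> IA_data m k" "0 < \<epsilon>" "\<epsilon> < 1" "1 \<le> k"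
  shows "integrable (unif_simplex k) (\<lambda>w. wealth m x (\<lambda>s. IA_mod k m \<epsilon> (x, v) s w) n)"
  by (rule integrable_unif_simplex[where B = "\<Prod>t<n. \<Sum>i<m. x t i"])
    (use assms(4) wealth_IA_mod_bounds[OF assms(1) _ assms(2,3)] in auto)

lemma integrable_IA_mod_wealth:
  assumes "(x, v) \<in> IA_data m k" "0 < \<epsilon>" "\<epsilon> < 1" "1 \<le> k" "i < m"
  shows "integrable (unif_simplex k) (\<lambda>w. IA_mod k m \<epsilon> (x, v) t w i * wealth m x (\<lambda>s. IA_mod k m \<epsilon> (x, v) s w) n)"
proof -
  note bounds = wealth_IA_mod_bounds[OF assms(1) _ assms(2,3)] IA_mod_bounds[OF assms(1) _ assms(5,2,3)]
  have "\<bar>IA_mod k m \<epsilon> (x, v) t w i * wealth m x (\<lambda>s. IA_mod k m \<epsilon> (x, v) s w) n\<bar>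
      \<le> (\<Prod>t<n. \<Sum>i<m. x t i)" if "w \<in> param_simplex k" for w
  proof -
    have "IA_mod k m \<epsilon> (x, v) t w i * wealth m x (\<lambda>s. IA_mod k m \<epsilon> (x, v) s w) n
        \<le> wealth m x (\<lambda>s. IA_mod k m \<epsilon> (x, v) s w) n"
      using bounds[OF that] by (intro mult_left_le_one_le) auto
    also have "\<dots> \<le> (\<Prod>t<n. \<Sum>i<m. x t i)"
      using bounds[OF that] by simp
    finally show ?thesis
      using bounds[OF that] by simp
  qed
  then show ?thesis
    using assms(4) by (intro integrable_unif_simplex) auto
qed

lemma wealth_IA_mod_ge:
  assumes d: "(x, v) \<in> IA_data m k" and w0: "w0 \<in> param_simplex k" and w: "w \<in> param_simplex k"
    and \<epsilon>: "0 < \<epsilon>" "\<epsilon> < 1" and m: "1 \<le> m" and \<theta>: "0 \<le> \<theta>" "\<theta> \<le> 1"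
    and ge: "\<And>j. j < k \<Longrightarrow> \<theta> * w0 j \<le> w j"
  shows "(\<theta> / (\<theta> + (1 - \<theta>) * real m)) ^ n / (real n + 1) * wealth m x (\<lambda>s. IA k m v s w0) n
           \<le> wealth m x (\<lambda>s. IA_mod k m \<epsilon> (x, v) s w) n"
proof -
  define c where "c = \<theta> / (\<theta> + (1 - \<theta>) * real m)"
  have "(1 - \<theta>) * 1 \<le> (1 - \<theta>) * real m"
    using \<theta> m by (intro mult_left_mono) auto
  then have denom: "1 \<le> \<theta> + (1 - \<theta>) * real m"
    by simp
  then have c: "0 \<le> c"
    unfolding c_def using \<theta> by simp
  have ratio: "c * IA k m v t w0 i \<le> IA k m v t w i" if "i < m" for t i
    using IA_ge_scaled[OF d w w0 that \<theta> ge, of t] denom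
    unfolding c_def by (simp add: field_simps)
  then have "(real t + 1) / (real t + 2) * c * IA k m v t w0 i \<le> IA_mod k m \<epsilon> (x, v) t w i"
    if "i < m" for t i
  proof -
    have "(real t + 1) / (real t + 2) * (c * IA k m v t w0 i) \<le> (real t + 1) / (real t + 2) * IA k m v t w i"
      using ratio[OF that] by (intro mult_left_mono) auto
    also have "\<dots> \<le> IA_mod k m \<epsilon> (x, v) t w i"
      using eps_mod_ge[of "IA_strategy k m" "(x, v)" t w i \<epsilon> m] IA_bounds[OF d w that, of t] \<epsilon> by simp
    finally show ?thesis
      by (simp add: mult.assoc)
  qed
  then have "(\<Prod>t<n. (real t + 1) / (real t + 2) * c) * wealth m x (\<lambda>s. IA k m v s w0) n
      \<le> wealth m x (\<lambda>s. IA_mod k m \<epsilon> (x, v) s w) n"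
    using c IA_data_returns_pos[OF d] dotm_IA_pos[OF d w0 m]
    by (intro wealth_scaled_le dotm_scaled_le)
      (auto simp: wealth_def intro: less_imp_le)
  moreover have "(\<Prod>t<n. (real t + 1) / (real t + 2) * c) = c ^ n / (real n + 1)"
    unfolding prod.distrib prod_succ_ratio by simp
  ultimately show ?thesis
    unfolding c_def by simp
qed

definition IA_wealth_factor :: "nat \<Rightarrow> nat \<Rightarrow> nat \<Rightarrow> real" where
  "IA_wealth_factor m k n =
     (real n / (real n + real m)) ^ n / (real n + 1) * (1 / ((real n + 1) * real (k-1))) ^ (k-1)"

definition IA_regret :: "nat \<Rightarrow> nat \<Rightarrow> nat \<Rightarrow> real" where
  "IA_regret m k n = - ln (IA_wealth_factor m k n) / real n"

lemma IA_wealth_factor_pos: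
  assumes "2 \<le> k"
  shows "0 < IA_wealth_factor m k n"
proof -
  have "0 < (real n / (real n + real m)) ^ n"
    by (cases "n = 0") auto
  then show ?thesis
    unfolding IA_wealth_factor_def using assms by simp
qed

lemma IA_regret_tendsto:
  assumes "2 \<le> k"
  shows "IA_regret m k \<longlonglongrightarrow> 0"
proof -
  define K where "K = real (k-1)"
  have K: "0 < K"
    using assms unfolding K_def by simp
  have pw: "(1 / ((real n + 1) * K)) powr K = (1 / ((real n + 1) * K)) ^ (k-1)" for n
    using K unfolding K_def by (intro powr_realpow) simp
  have "IA_regret m k = (\<lambda>n. - ln ((real n / (real n + real m)) ^ n / (real n + 1)
                                 * (1 / ((real n + 1) * K)) powr K) / real n)"
    unfolding pw unfolding IA_regret_def IA_wealth_factor_def K_def ..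
  also have "\<dots> \<longlonglongrightarrow> 0"
    using K by real_asymp
  finally show ?thesis .
qed

lemma integral_wealth_IA_mod_ge:
  assumes d: "(x, v) \<in> IA_data m k" and w0: "w0 \<in> param_simplex k"
    and \<epsilon>: "0 < \<epsilon>" "\<epsilon> < 1" and m: "1 \<le> m" and k: "2 \<le> k"
  shows "IA_wealth_factor m k n * wealth m x (\<lambda>s. IA k m v s w0) n
           \<le> (\<integral>w. wealth m x (\<lambda>s. IA_mod k m \<epsilon> (x, v) s w) n \<partial>unif_simplex k)"
proof -
  define \<theta> where "\<theta> = real n / (real n + 1)"
  define C where "C = (real n / (real n + real m)) ^ n / (real n + 1) * wealth m x (\<lambda>s. IA k m v s w0) n"
  have \<theta>: "0 \<le> \<theta>" "\<theta> \<le> 1"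
    unfolding \<theta>_def by auto
  have one_minus_\<theta>: "1 - \<theta> = 1 / (real n + 1)"
    unfolding \<theta>_def by (simp add: field_simps)
  have "\<theta> + (1 - \<theta>) * real m = (real n + real m) / (real n + 1)"
    unfolding one_minus_\<theta> unfolding \<theta>_def by (simp add: add_divide_distrib)
  then have ratio: "\<theta> / (\<theta> + (1 - \<theta>) * real m) = real n / (real n + real m)"
    unfolding \<theta>_def using m by simp
  have "C * ((1 - \<theta>) / real (k-1)) ^ (k-1) \<le> (\<integral>w. wealth m x (\<lambda>s. IA_mod k m \<epsilon> (x, v) s w) n \<partial>unif_simplex k)"
  proof (rule integral_unif_simplex_ge[OF k w0 \<theta>])
    show "0 \<le> C"
      unfolding C_def using wealth_IA_pos[OF d w0 m, of n] by simp
    show "integrable (unif_simplex k) (\<lambda>w. wealth m x (\<lambda>s. IA_mod k m \<epsilon> (x, v) s w) n)"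
      using k by (intro integrable_wealth_IA_mod[OF d \<epsilon>]) simp
    show "0 \<le> wealth m x (\<lambda>s. IA_mod k m \<epsilon> (x, v) s w) n" if "w \<in> param_simplex k" for w
      by (rule wealth_IA_mod_bounds(1)[OF d that \<epsilon>])
    show "C \<le> wealth m x (\<lambda>s. IA_mod k m \<epsilon> (x, v) s w) n"
      if "w \<in> param_simplex k" "\<And>j. j < k \<Longrightarrow> \<theta> * w0 j \<le> w j" for w
      using wealth_IA_mod_ge[OF d w0 that(1) \<epsilon> m \<theta> that(2), of n] unfolding C_def ratio .
  qed simp
  moreover have "(1 - \<theta>) / real (k-1) = 1 / ((real n + 1) * real (k-1))"
    unfolding one_minus_\<theta> by simp
  ultimately show ?thesis
    unfolding IA_wealth_factor_def C_def by (simp add: mult_ac)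
qed

lemma integral_wealth_IA_mod_pos:
  assumes "(x, v) \<in> IA_data m k" "0 < \<epsilon>" "\<epsilon> < 1" "1 \<le> m" "2 \<le> k"
  shows "0 < (\<integral>w. wealth m x (\<lambda>s. IA_mod k m \<epsilon> (x, v) s w) n \<partial>unif_simplex k)"
proof -
  let ?w0 = "\<lambda>j. if j = 0 then 1 else 0"
  have w0: "?w0 \<in> param_simplex k"
    using assms(5) by (intro vertex_in_param_simplex) simp
  have "0 < IA_wealth_factor m k n * wealth m x (\<lambda>s. IA k m v s ?w0) n"
    using IA_wealth_factor_pos[OF assms(5)] wealth_IA_pos[OF assms(1) w0 assms(4)] by simp
  also have "\<dots> \<le> (\<integral>w. wealth m x (\<lambda>s. IA_mod k m \<epsilon> (x, v) s w) n \<partial>unif_simplex k)"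
    by (rule integral_wealth_IA_mod_ge[OF assms(1) w0 assms(2-5)])
  finally show ?thesis .
qed

lemma wealth_univ_port_IA_mod:
  assumes "(x, v) \<in> IA_data m k" "0 < \<epsilon>" "\<epsilon> < 1" "1 \<le> m" "2 \<le> k"
  shows "wealth m x (univ_port (unif_simplex k) m fst (IA_mod k m \<epsilon>) (x, v)) n
           = (\<integral>w. wealth m x (\<lambda>s. IA_mod k m \<epsilon> (x, v) s w) n \<partial>unif_simplex k)"
  using wealth_univ_port[OF prob_space_unif_simplex, where m = m and xs = fst and d = "(x, v)"
      and S = "IA_mod k m \<epsilon>" and n = n]
    integral_wealth_IA_mod_pos[OF assms] integrable_IA_mod_wealth[OF assms(1-3)] assms(5)
  by (simp add: less_imp_neq[symmetric])

lemma growth_univ_port_IA_mod_ge: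
  assumes "d \<in> IA_data m k" "0 < \<epsilon>" "\<epsilon> < 1" "1 \<le> m" "2 \<le> k" "1 \<le> n"
  shows "(SUP w\<in>param_simplex k. growth m (fst d) (\<lambda>t. IA k m (snd d) t w) n) - IA_regret m k n
           \<le> growth m (fst d) (univ_port (unif_simplex k) m fst (IA_mod k m \<epsilon>) d) n"
proof -
  obtain x v where xv: "d = (x, v)" and d: "(x, v) \<in> IA_data m k"
    using assms(1) by (cases d) auto
  define I where "I = (\<integral>w. wealth m x (\<lambda>s. IA_mod k m \<epsilon> (x, v) s w) n \<partial>unif_simplex k)"
  have "growth m x (\<lambda>t. IA k m v t w0) n \<le> ln I / real n + IA_regret m k n"
    if w0: "w0 \<in> param_simplex k" for w0
  proof -
    define R where "R = wealth m x (\<lambda>s. IA k m v s w0) n"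
    have pos: "0 < R" "0 < IA_wealth_factor m k n"
      unfolding R_def using wealth_IA_pos[OF d w0 assms(4)] IA_wealth_factor_pos[OF assms(5)] by auto
    have "ln (IA_wealth_factor m k n) + ln R = ln (IA_wealth_factor m k n * R)"
      using pos by (simp add: ln_mult)
    also have "\<dots> \<le> ln I"
      using pos integral_wealth_IA_mod_ge[OF d w0 assms(2-5)] unfolding R_def I_def
      by (intro ln_mono) auto
    finally show ?thesis
      using assms(6) unfolding growth_def IA_regret_def R_def[symmetric]
      by (simp add: field_simps)
  qed
  then have "(SUP w\<in>param_simplex k. growth m x (\<lambda>t. IA k m v t w) n) \<le> ln I / real n + IA_regret m k n"
    using vertex_in_param_simplex[of k] assms(5) by (intro cSUP_least) auto
  moreover have "growth m x (univ_port (unif_simplex k) m fst (IA_mod k m \<epsilon>) (x, v)) n = ln I / real n"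
    unfolding growth_def I_def using wealth_univ_port_IA_mod[OF d assms(2-5)] by simp
  ultimately show ?thesis
    unfolding xv by simp
qed

theorem mainTheorem9:
  fixes m k :: nat
  assumes "m \<ge> 2" and "k \<ge> 2"
  shows "universalizable (IA_data m k) m fst (param_simplex k) (unif_simplex k)
           (\<lambda>d. IA k m (snd d))"
proof -
  have "1 \<le> m"
    using assms(1) by simp
  then show ?thesis
    unfolding universalizable_def is_universalization_def
    using IA_regret_tendsto[OF assms(2)] growth_univ_port_IA_mod_ge[of _ m k] assms(2) by blast
qed

end
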